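(* Let $k\geq 0$ and put $T_i=2^{i}(2^{i+1}+1)$. Then there exist rational numbers $\alpha_0,\dots,\alpha_k$ (depending on $k$ but not on $n$) such that for all $n\geq 0$: $$S_k(n)=\sum_{i=0}^{k/2}\alpha_{2i}T_{2i}^{\,n}\ \text{ if $k$ is even},\qquad S_k(n)=\sum_{i=1}^{(k+1)/2}\alpha_{2i-1}T_{2i-1}^{\,n}\ \text{ if $k$ is odd}.$$
   Context: The Stern polynomials $B_n(t)\in\mathbb{Z}[t]$ are defined by $B_0(t)=0$, $B_1(t)=1$, and for $n\geq 1$: $B_{2n}(t)=tB_n(t)$, $B_{2n+1}(t)=B_n(t)+B_{n+1}(t)$. For $n\geq1$ let $e(n)=\deg B_n(t)$. For $k,n\geq 0$ let $S_k(n)=\sum_{a\geq 1:\;e(a)=n}a^{k}$ (a finite sum over the positive integers $a$ with $e(a)=n$). *)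

theory Defs
  imports "HOL-Computational_Algebra.Polynomial"
begin

function stern_poly :: "nat \<Rightarrow> int poly" where
  "stern_poly n =
     (if n = 0 then 0
      else if n = 1 then 1
      else if even n then [:0, 1:] * stern_poly (n div 2)
      else stern_poly (n div 2) + stern_poly (n div 2 + 1))"
  by pat_completeness auto
termination
  by (relation "measure id") (auto elim!: oddE)

definition stern_e :: "nat \<Rightarrow> nat" where
  "stern_e n = degree (stern_poly n)"

definition stern_S :: "nat \<Rightarrow> nat \<Rightarrow> nat" where
  "stern_S k n = (\<Sum>a\<in>{a. a \<ge> 1 \<and> stern_e a = n}. a ^ k)"

definition stern_T :: "nat \<Rightarrow> nat" where
  "stern_T i = 2 ^ i * (2 ^ (i + 1) + 1)"

end

theory Submission
  imports Defs
begin

(*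
  Write e(a) for the degree of the Stern polynomial B_a.  Since B_a has
  nonnegative coefficients, e(2a) = e(a) + 1 and e(2a+1) = max (e a) (e (a+1)); together
  with |e(a+1) - e(a)| <= 1 this shows that every a >= 2 arises in exactly one way as
  2b, 4b-1 or 4b+1 from some b >= 1 with e(a) = e(b) + 1.  Hence the level sets
  L n = {a >= 1. e a = n} satisfy L 0 = {1} and
      L (n+1) = 2 L n  \<union>  (4 L n - 1)  \<union>  (4 L n + 1)   (disjointly),
  and expanding (2b)^k + (4b-1)^k + (4b+1)^k binomially gives the triangular recursion
      S_k(n+1) = T_k S_k(n) + \<Sum>_{j<k, j \<equiv> k mod 2} c_{k,j} S_j(n).
  Since T_0 < T_1 < ..., induction on k and the explicit solution of a first order
  inhomogeneous linear recurrence show that S_k(n) is a rational combination of the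
  powers T_i^n with i <= k and i \<equiv> k (mod 2); the theorem is this statement with the
  sum re-indexed over the parity class.
*)

declare stern_poly.simps [simp del]

abbreviation S_rat :: "nat \<Rightarrow> nat \<Rightarrow> rat" where
  "S_rat k n \<equiv> of_nat (stern_S k n)"

abbreviation T_rat :: "nat \<Rightarrow> rat" where
  "T_rat i \<equiv> of_nat (stern_T i)"

section \<open>Stern polynomials and their degrees\<close>

lemma stern_poly_1 [simp]: "stern_poly (Suc 0) = 1"
  by (subst stern_poly.simps) simp

lemma stern_poly_even: "n \<ge> 1 \<Longrightarrow> stern_poly (2 * n) = [:0, 1:] * stern_poly n"
  by (subst stern_poly.simps) simp

lemma stern_poly_odd: "n \<ge> 1 \<Longrightarrow> stern_poly (2 * n + 1) = stern_poly n + stern_poly (n + 1)"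
  by (subst stern_poly.simps) simp

lemma stern_induct [consumes 1, case_names one even odd]:
  fixes P :: "nat \<Rightarrow> bool" and n :: nat
  assumes "n \<ge> 1"
    and "P 1"
    and "\<And>m. m \<ge> 1 \<Longrightarrow> P m \<Longrightarrow> P (2 * m)"
    and "\<And>m. m \<ge> 1 \<Longrightarrow> P m \<Longrightarrow> P (m + 1) \<Longrightarrow> P (2 * m + 1)"
  shows "P n"
  using \<open>n \<ge> 1\<close>
proof (induction n rule: less_induct)
  case (less n)
  show ?case
  proof (cases "n = 1")
    case True
    then show ?thesis using assms(2) by simp
  next
    case False
    define m where "m = n div 2"
    have "m \<ge> 1" "m < n" using less.prems False unfolding m_def by auto
    have "n = 2 * m \<or> n = 2 * m + 1" unfolding m_def by presburger
    then show ?thesis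
    proof
      assume "n = 2 * m"
      then show ?thesis using assms(3) less.IH \<open>m \<ge> 1\<close> \<open>m < n\<close> by blast
    next
      assume n: "n = 2 * m + 1"
      then have "m + 1 < n" using \<open>m \<ge> 1\<close> by simp
      then show ?thesis using n assms(4) less.IH \<open>m \<ge> 1\<close> \<open>m < n\<close> by simp
    qed
  qed
qed

text \<open>Polynomials with nonnegative coefficients: no cancellation of leading terms.\<close>

definition nonneg_coeffs :: "'a::linordered_idom poly \<Rightarrow> bool" where
  "nonneg_coeffs p \<longleftrightarrow> (\<forall>i. coeff p i \<ge> 0)"

lemma nonneg_coeffs_add: "nonneg_coeffs p \<Longrightarrow> nonneg_coeffs q \<Longrightarrow> nonneg_coeffs (p + q)"
  by (simp add: nonneg_coeffs_def)

lemma nonneg_coeffs_shift: "nonneg_coeffs p \<Longrightarrow> nonneg_coeffs (pCons 0 p)"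
  by (simp add: nonneg_coeffs_def coeff_pCons split: nat.split)

lemma nonneg_coeffs_lead_pos: "nonneg_coeffs p \<Longrightarrow> p \<noteq> 0 \<Longrightarrow> lead_coeff p > 0"
  unfolding nonneg_coeffs_def by (metis leading_coeff_neq_0 order_le_neq_trans)

lemma nonneg_coeffs_add_degree:
  fixes p q :: "'a::linordered_idom poly"
  assumes "nonneg_coeffs p" "nonneg_coeffs q" "p \<noteq> 0" "q \<noteq> 0"
  shows "p + q \<noteq> 0 \<and> degree (p + q) = max (degree p) (degree q)"
proof -
  let ?m = "max (degree p) (degree q)"
  have pos: "coeff (p + q) ?m > 0"
    using assms nonneg_coeffs_lead_pos[of p] nonneg_coeffs_lead_pos[of q]
    by (cases "degree p \<le> degree q")
       (auto simp: max_def nonneg_coeffs_def add_nonneg_pos add_pos_nonneg)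
  then have "p + q \<noteq> 0" by (metis coeff_0 less_irrefl)
  moreover have "?m \<le> degree (p + q)" using pos by (intro le_degree) simp
  ultimately show ?thesis using degree_add_le_max[of p q] le_antisym by blast
qed

lemma stern_poly_nonneg: "n \<ge> 1 \<Longrightarrow> stern_poly n \<noteq> 0 \<and> nonneg_coeffs (stern_poly n)"
proof (induction n rule: stern_induct)
  case one
  then show ?case by (simp add: nonneg_coeffs_def)
next
  case (even m)
  then show ?case by (simp add: stern_poly_even nonneg_coeffs_shift)
next
  case (odd m)
  then show ?case
    unfolding stern_poly_odd[OF \<open>m \<ge> 1\<close>] using nonneg_coeffs_add nonneg_coeffs_add_degree by blast
qed

lemma stern_e_1 [simp]: "stern_e (Suc 0) = 0"
  by (simp add: stern_e_def)

lemma stern_e_even: "n \<ge> 1 \<Longrightarrow> stern_e (2 * n) = stern_e n + 1"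
  using stern_poly_nonneg[of n] by (simp add: stern_e_def stern_poly_even degree_mult_eq)

lemma stern_e_odd:
  assumes "n \<ge> 1"
  shows "stern_e (2 * n + 1) = max (stern_e n) (stern_e (n + 1))"
proof -
  have "degree (stern_poly n + stern_poly (n + 1)) = max (stern_e n) (stern_e (n + 1))"
    using nonneg_coeffs_add_degree[of "stern_poly n" "stern_poly (n + 1)"]
      stern_poly_nonneg[of n] stern_poly_nonneg[of "n + 1"] assms
    unfolding stern_e_def by simp
  then show ?thesis by (simp only: stern_e_def stern_poly_odd[OF assms])
qed

text \<open>Consecutive degrees differ by at most one; this decides the maxima in the
  degree formulas for the children 4b-1 and 4b+1.\<close>

lemma stern_e_step: "n \<ge> 1 \<Longrightarrow> stern_e (n + 1) \<le> stern_e n + 1 \<and> stern_e n \<le> stern_e (n + 1) + 1"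
proof (induction n rule: stern_induct)
  case one
  then show ?case using stern_e_even[of 1] by (simp add: numeral_2_eq_2)
next
  case (even m)
  then show ?case using stern_e_even[of m] stern_e_odd[of m] by auto
next
  case (odd m)
  have "2 * m + 1 + 1 = 2 * (m + 1)" by simp
  then have "stern_e (2 * m + 1 + 1) = stern_e (m + 1) + 1"
    using stern_e_even[of "m + 1"] by simp
  then show ?case using odd stern_e_odd[of m] by (auto simp: max_def)
qed

lemma stern_e_4_plus:
  assumes "b \<ge> 1"
  shows "stern_e (4 * b + 1) = stern_e b + 1"
proof -
  have "stern_e (4 * b + 1) = max (stern_e (2 * b)) (stern_e (2 * b + 1))"
    using stern_e_odd[of "2 * b"] assms by (simp add: mult.assoc[symmetric])
  also have "\<dots> = stern_e b + 1"
    using stern_e_even[OF assms] stern_e_odd[OF assms] stern_e_step[OF assms] by auto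
  finally show ?thesis .
qed

lemma stern_e_4_minus:
  assumes "b \<ge> 1"
  shows "stern_e (4 * b - 1) = stern_e b + 1"
proof -
  define c where "c = b - 1"
  have c: "b = c + 1" using assms unfolding c_def by simp
  have "4 * b - 1 = 2 * (2 * c + 1) + 1" using c by simp
  then have "stern_e (4 * b - 1) = max (stern_e (2 * c + 1)) (stern_e (2 * (c + 1)))"
    using stern_e_odd[of "2 * c + 1"] by simp
  also have "\<dots> = stern_e b + 1"
  proof (cases "c = 0")
    case True
    then show ?thesis using c stern_e_even[of 1] by simp
  next
    case False
    then have "stern_e (2 * c + 1) = max (stern_e c) (stern_e (c + 1))" using stern_e_odd by simp
    then show ?thesis using stern_e_even[of "c + 1"] stern_e_step[of c] False c by auto
  qed
  finally show ?thesis .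
qed

lemma stern_e_parent:
  assumes "a \<ge> 2"
  shows "\<exists>b\<ge>1. (a = 2 * b \<or> a = 4 * b - 1 \<or> a = 4 * b + 1) \<and> stern_e a = stern_e b + 1"
proof -
  have "even a \<or> a mod 4 = 1 \<or> a mod 4 = 3" by presburger
  then consider "even a" | "a mod 4 = 1" | "a mod 4 = 3" by blast
  then show ?thesis
  proof cases
    case 1
    then obtain b where "a = 2 * b" by blast
    then show ?thesis using assms stern_e_even[of b] by (intro exI[of _ b]) auto
  next
    case 2
    define b where "b = a div 4"
    have "a = 4 * b + 1" "b \<ge> 1" using 2 assms unfolding b_def by presburger+
    then show ?thesis using stern_e_4_plus[of b] by blast
  next
    case 3
    define b where "b = a div 4 + 1"
    have "a = 4 * b - 1" "b \<ge> 1" using 3 unfolding b_def by presburger+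
    then show ?thesis using stern_e_4_minus[of b] by blast
  qed
qed

section \<open>The level sets of the degree\<close>

definition level :: "nat \<Rightarrow> nat set" where
  "level n = {a. a \<ge> 1 \<and> stern_e a = n}"

lemma level_pos: "a \<in> level n \<Longrightarrow> a \<ge> 1"
  unfolding level_def by simp

lemma level_0: "level 0 = {1}"
proof -
  have "a < 2" if "a \<ge> 1" "stern_e a = 0" for a
    using that stern_e_parent[of a] by (cases "a \<ge> 2") auto
  then show ?thesis by (force simp: level_def)
qed

lemma level_Suc:
  "level (Suc n) = (\<lambda>b. 2 * b) ` level n \<union> (\<lambda>b. 4 * b - 1) ` level n \<union> (\<lambda>b. 4 * b + 1) ` level n"
  (is "_ = ?R")
proof
  show "level (Suc n) \<subseteq> ?R"
  proof
    fix a assume a: "a \<in> level (Suc n)"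
    then have "a \<ge> 1" "a \<noteq> 1" by (auto simp: level_def)
    then have "a \<ge> 2" by simp
    then obtain b where "b \<ge> 1" "a = 2 * b \<or> a = 4 * b - 1 \<or> a = 4 * b + 1"
        "stern_e a = stern_e b + 1"
      using stern_e_parent by blast
    then show "a \<in> ?R" using a by (auto simp: level_def)
  qed
  show "?R \<subseteq> level (Suc n)"
    using stern_e_even stern_e_4_minus stern_e_4_plus by (auto simp: level_def)
qed

lemma finite_level: "finite (level n)"
  by (induction n) (simp_all add: level_0 level_Suc)

lemma stern_S_level: "S_rat k n = (\<Sum>a\<in>level n. of_nat a ^ k)"
  by (simp add: stern_S_def level_def)

section \<open>The recursion for the power sums\<close>

text \<open>The three children 2b, 4b-1, 4b+1 of distinct parents are all distinct.\<close>

lemma S_rat_Suc: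
  "S_rat k (Suc n) = (\<Sum>b\<in>level n. (2 * of_nat b) ^ k + (4 * of_nat b - 1) ^ k + (4 * of_nat b + 1) ^ k)"
proof -
  let ?L = "level n"
  have "2 * b \<noteq> 4 * c - 1" "2 * b \<noteq> 4 * c + 1" "4 * c - 1 \<noteq> 4 * b + 1"
    if "c \<ge> 1" for b c :: nat
    using that by presburger+
  then have disj1: "(\<lambda>b. 2 * b) ` ?L \<inter> (\<lambda>b. 4 * b - 1) ` ?L = {}"
    and disj2: "((\<lambda>b. 2 * b) ` ?L \<union> (\<lambda>b. 4 * b - 1) ` ?L) \<inter> (\<lambda>b. 4 * b + 1) ` ?L = {}"
    using level_pos by blast+
  have inj: "inj_on (\<lambda>b. 2 * b) ?L" "inj_on (\<lambda>b. 4 * b - 1) ?L" "inj_on (\<lambda>b. 4 * b + 1) ?L"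
    using level_pos by (auto simp: inj_on_def)
  have "S_rat k (Suc n) = (\<Sum>a\<in>(\<lambda>b. 2 * b) ` ?L. of_nat a ^ k)
      + (\<Sum>a\<in>(\<lambda>b. 4 * b - 1) ` ?L. of_nat a ^ k) + (\<Sum>a\<in>(\<lambda>b. 4 * b + 1) ` ?L. of_nat a ^ k)"
    unfolding stern_S_level level_Suc
    by (subst sum.union_disjoint, use finite_level disj2 in auto,
        subst sum.union_disjoint, use finite_level disj1 in auto)
  also have "\<dots> = (\<Sum>b\<in>?L. of_nat (2 * b) ^ k) + (\<Sum>b\<in>?L. of_nat (4 * b - 1) ^ k)
      + (\<Sum>b\<in>?L. of_nat (4 * b + 1) ^ k)"
    by (simp only: sum.reindex[OF inj(1)] sum.reindex[OF inj(2)] sum.reindex[OF inj(3)] comp_def)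
  also have "(\<Sum>b\<in>?L. of_nat (4 * b - 1) ^ k) = (\<Sum>b\<in>?L. (4 * of_nat b - 1 :: rat) ^ k)"
    by (rule sum.cong) (auto dest: level_pos simp: of_nat_diff)
  finally show ?thesis by (simp add: sum.distrib ac_simps)
qed

text \<open>Binomial expansion of the children's k-th powers; odd powers of the shift cancel.\<close>

definition coef :: "nat \<Rightarrow> nat \<Rightarrow> rat" where
  "coef k j = (if j = k then 2 ^ k else 0) + of_nat (k choose j) * 4 ^ j * (1 + (-1) ^ (k - j))"

lemma children_powers_expand:
  "(2 * x) ^ k + (4 * x - 1) ^ k + (4 * x + 1) ^ k = (\<Sum>j\<le>k. coef k j * (x :: rat) ^ j)"
proof -
  have plus: "(4 * x + 1) ^ k = (\<Sum>j\<le>k. of_nat (k choose j) * 4 ^ j * x ^ j)"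
    by (subst binomial_ring) (simp add: power_mult_distrib mult.assoc)
  have minus: "(4 * x - 1) ^ k = (\<Sum>j\<le>k. of_nat (k choose j) * 4 ^ j * x ^ j * (-1) ^ (k - j))"
    using binomial_ring[of "4 * x" "-1" k] by (simp add: power_mult_distrib mult.assoc)
  have double: "(2 * x) ^ k = (\<Sum>j\<le>k. (if j = k then 2 ^ k else 0) * x ^ j)"
    by (simp add: power_mult_distrib if_distrib[of "\<lambda>c. c * _"] cong: if_cong)
  show ?thesis
    unfolding plus minus double coef_def by (simp add: sum.distrib[symmetric] algebra_simps)
qed

lemma coef_diag: "coef k k = T_rat k"
proof -
  have "(4 :: rat) ^ k = 2 ^ k * 2 ^ k" by (simp flip: power_mult_distrib)
  then show ?thesis by (simp add: coef_def stern_T_def power_add algebra_simps)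
qed

lemma coef_parity:
  assumes "j < k" "odd (k + j)"
  shows "coef k j = 0"
proof -
  have "odd (k - j)" using assms by presburger
  then show ?thesis using assms(1) by (simp add: coef_def)
qed

lemma S_rat_rec: "S_rat k (Suc n) = T_rat k * S_rat k n + (\<Sum>j<k. coef k j * S_rat j n)"
proof -
  have "S_rat k (Suc n) = (\<Sum>b\<in>level n. \<Sum>j\<le>k. coef k j * of_nat b ^ j)"
    unfolding S_rat_Suc children_powers_expand ..
  also have "\<dots> = (\<Sum>j\<le>k. \<Sum>b\<in>level n. coef k j * of_nat b ^ j)"
    by (rule sum.swap)
  also have "\<dots> = (\<Sum>j\<le>k. coef k j * S_rat j n)"
    by (simp add: stern_S_level sum_distrib_left)
  finally show ?thesis by (simp add: lessThan_Suc_atMost[symmetric] coef_diag)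
qed

lemma S_rat_0: "S_rat k 0 = 1"
  by (simp add: stern_S_level level_0)

section \<open>First order linear recurrences with exponential forcing\<close>

lemma linear_recurrence_solution:
  fixes u x g :: "nat \<Rightarrow> 'a::field"
  assumes distinct: "\<forall>i\<in>I. x i \<noteq> t"
    and rec: "\<And>n. u (Suc n) = t * u n + (\<Sum>i\<in>I. g i * x i ^ n)"
  shows "u n = (u 0 - (\<Sum>i\<in>I. g i / (x i - t))) * t ^ n + (\<Sum>i\<in>I. g i / (x i - t) * x i ^ n)"
proof (induction n)
  case 0
  show ?case by (simp add: sum.distrib)
next
  case (Suc n)
  define c where "c i = g i / (x i - t)" for i
  have "c i * x i ^ Suc n = t * (c i * x i ^ n) + g i * x i ^ n" if "i \<in> I" for i
  proof -
    have "c i * x i ^ Suc n = t * (c i * x i ^ n) + c i * (x i - t) * x i ^ n"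
      by (simp add: algebra_simps)
    also have "c i * (x i - t) = g i" using distinct that by (simp add: c_def)
    finally show ?thesis .
  qed
  then have "(\<Sum>i\<in>I. c i * x i ^ Suc n) = t * (\<Sum>i\<in>I. c i * x i ^ n) + (\<Sum>i\<in>I. g i * x i ^ n)"
    by (simp add: sum.distrib sum_distrib_left)
  then show ?case
    unfolding rec Suc.IH c_def[symmetric] by (simp add: algebra_simps)
qed

section \<open>Exponential representation of the power sums\<close>

definition parity_class :: "nat \<Rightarrow> nat set" where
  "parity_class k = {i. i \<le> k \<and> even (k + i)}"

definition parity_repr :: "nat \<Rightarrow> (nat \<Rightarrow> rat) \<Rightarrow> (nat \<Rightarrow> rat) \<Rightarrow> bool" where
  "parity_repr k u \<alpha> \<longleftrightarrow> (\<forall>i. \<alpha> i \<noteq> 0 \<longrightarrow> i \<in> parity_class k) \<and>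
     (\<forall>n. u n = (\<Sum>i\<le>k. \<alpha> i * T_rat i ^ n))"

lemma T_strict_mono: "i < k \<Longrightarrow> stern_T i < stern_T k"
  unfolding stern_T_def by (intro mult_strict_mono power_strict_increasing) auto

lemma parity_repr_extend:
  assumes "parity_repr j u \<alpha>" "j < k"
  shows "u n = (\<Sum>i<k. \<alpha> i * T_rat i ^ n)"
proof -
  have "u n = (\<Sum>i\<le>j. \<alpha> i * T_rat i ^ n)" using assms(1) by (simp add: parity_repr_def)
  also have "\<dots> = (\<Sum>i<k. \<alpha> i * T_rat i ^ n)"
    using assms by (intro sum.mono_neutral_left) (auto simp: parity_repr_def parity_class_def not_le)
  finally show ?thesis .
qed

lemma forcing_repr:
  assumes lower: "\<And>j. j < k \<Longrightarrow> parity_repr j (S_rat j) (A j)"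
  defines "\<gamma> \<equiv> \<lambda>i. \<Sum>j<k. coef k j * A j i"
  shows "(\<Sum>j<k. coef k j * S_rat j n) = (\<Sum>i<k. \<gamma> i * T_rat i ^ n)"
    and "\<gamma> i \<noteq> 0 \<Longrightarrow> even (k + i)"
proof -
  have "(\<Sum>j<k. coef k j * S_rat j n) = (\<Sum>j<k. \<Sum>i<k. coef k j * A j i * T_rat i ^ n)"
    by (rule sum.cong[OF refl]) (simp add: parity_repr_extend[OF lower] sum_distrib_left mult.assoc)
  also have "\<dots> = (\<Sum>i<k. \<Sum>j<k. coef k j * A j i * T_rat i ^ n)"
    by (rule sum.swap)
  also have "\<dots> = (\<Sum>i<k. \<gamma> i * T_rat i ^ n)"
    by (simp add: \<gamma>_def sum_distrib_right)
  finally show "(\<Sum>j<k. coef k j * S_rat j n) = (\<Sum>i<k. \<gamma> i * T_rat i ^ n)" .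
next
  assume "\<gamma> i \<noteq> 0"
  then obtain j where j: "j \<in> {..<k}" "coef k j * A j i \<noteq> 0"
    unfolding \<gamma>_def using sum.not_neutral_contains_not_neutral by blast
  then have "even (k + j)" using coef_parity by fastforce
  moreover have "even (j + i)" using lower j by (simp add: parity_repr_def parity_class_def)
  ultimately show "even (k + i)" by presburger
qed

theorem S_rat_parity_repr: "\<exists>\<alpha>. parity_repr k (S_rat k) \<alpha>"
proof (induction k rule: less_induct)
  case (less k)
  then obtain A where lower: "\<And>j. j < k \<Longrightarrow> parity_repr j (S_rat j) (A j)"
    by metis
  define \<gamma> where "\<gamma> i = (\<Sum>j<k. coef k j * A j i)" for i
  define \<delta> where "\<delta> i = \<gamma> i / (T_rat i - T_rat k)" for i
  define \<alpha> where "\<alpha> i = (if i < k then \<delta> i else if i = k then 1 - (\<Sum>i<k. \<delta> i) else 0)" for i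
  have rec: "S_rat k (Suc n) = T_rat k * S_rat k n + (\<Sum>i<k. \<gamma> i * T_rat i ^ n)" for n
    using S_rat_rec forcing_repr(1)[OF lower] unfolding \<gamma>_def by simp
  have distinct: "\<forall>i\<in>{..<k}. T_rat i \<noteq> T_rat k"
    using T_strict_mono by (metis lessThan_iff nat_neq_iff of_nat_eq_iff)
  have "S_rat k n = (\<Sum>i\<le>k. \<alpha> i * T_rat i ^ n)" for n
    using linear_recurrence_solution[OF distinct rec, of n]
    by (simp add: S_rat_0 \<alpha>_def \<delta>_def flip: lessThan_Suc_atMost)
  moreover have "\<gamma> i \<noteq> 0 \<Longrightarrow> even (k + i)" for i
    using forcing_repr(2)[OF lower] unfolding \<gamma>_def by blast
  then have "\<alpha> i \<noteq> 0 \<Longrightarrow> i \<in> parity_class k" for i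
    by (auto simp: \<alpha>_def \<delta>_def parity_class_def split: if_splits)
  ultimately have "parity_repr k (S_rat k) \<alpha>"
    by (simp add: parity_repr_def)
  then show ?case by blast
qed

lemma parity_class_even:
  assumes "even k"
  shows "parity_class k = (\<lambda>i. 2 * i) ` {0..k div 2}"
proof (intro set_eqI iffI)
  fix i assume "i \<in> parity_class k"
  then have "i = 2 * (i div 2)" "i div 2 \<in> {0..k div 2}"
    using assms by (auto simp: parity_class_def)
  then show "i \<in> (\<lambda>i. 2 * i) ` {0..k div 2}" by (rule image_eqI)
qed (use assms in \<open>auto simp: parity_class_def\<close>)

lemma parity_class_odd:
  assumes "odd k"
  shows "parity_class k = (\<lambda>i. 2 * i - 1) ` {1..(k + 1) div 2}"
proof (intro set_eqI iffI)
  fix i assume "i \<in> parity_class k"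
  then have "i = 2 * ((i + 1) div 2) - 1" "(i + 1) div 2 \<in> {1..(k + 1) div 2}"
    using assms by (auto simp: parity_class_def)
  then show "i \<in> (\<lambda>i. 2 * i - 1) ` {1..(k + 1) div 2}" by (rule image_eqI)
next
  fix i assume "i \<in> (\<lambda>i. 2 * i - 1) ` {1..(k + 1) div 2}"
  then show "i \<in> parity_class k" using assms by (auto simp: parity_class_def) presburger+
qed

lemma sum_parity_class:
  assumes "\<And>i. f i \<noteq> 0 \<Longrightarrow> i \<in> parity_class k"
  shows "(\<Sum>i\<le>k. f i) =
    (if even k then (\<Sum>i = 0..k div 2. f (2 * i)) else (\<Sum>i = 1..(k + 1) div 2. f (2 * i - 1)))"
proof -
  have "(\<Sum>i\<le>k. f i) = sum f (parity_class k)"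
    using assms by (intro sum.mono_neutral_right) (auto simp: parity_class_def)
  also have "\<dots> =
    (if even k then (\<Sum>i = 0..k div 2. f (2 * i)) else (\<Sum>i = 1..(k + 1) div 2. f (2 * i - 1)))"
  proof (cases "even k")
    case True
    have "inj_on (\<lambda>i. 2 * i) {0..k div 2}" by (auto simp: inj_on_def)
    then show ?thesis unfolding parity_class_even[OF True] using True by (simp add: sum.reindex)
  next
    case False
    have "inj_on (\<lambda>i. 2 * i - 1) {1..(k + 1) div 2}" by (auto simp: inj_on_def)
    then show ?thesis unfolding parity_class_odd[OF False]
      using False by (simp only: sum.reindex comp_def if_False)
  qed
  finally show ?thesis .
qed

theorem mainTheorem10:
  fixes k :: nat
  shows "\<exists>\<alpha> :: nat \<Rightarrow> rat. \<forall>n :: nat.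
    of_nat (stern_S k n) =
      (if even k
       then (\<Sum>i = 0..k div 2. \<alpha> (2 * i) * of_nat (stern_T (2 * i)) ^ n)
       else (\<Sum>i = 1..(k + 1) div 2. \<alpha> (2 * i - 1) * of_nat (stern_T (2 * i - 1)) ^ n))"
proof -
  obtain \<alpha> where repr: "parity_repr k (S_rat k) \<alpha>"
    using S_rat_parity_repr by blast
  show ?thesis
  proof (intro exI allI)
    fix n
    have "S_rat k n = (\<Sum>i\<le>k. \<alpha> i * T_rat i ^ n)"
      using repr by (simp add: parity_repr_def)
    also have "\<dots> = (if even k then (\<Sum>i = 0..k div 2. \<alpha> (2 * i) * T_rat (2 * i) ^ n)
        else (\<Sum>i = 1..(k + 1) div 2. \<alpha> (2 * i - 1) * T_rat (2 * i - 1) ^ n))"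
      using repr by (intro sum_parity_class) (simp add: parity_repr_def)
    finally show "S_rat k n = (if even k then (\<Sum>i = 0..k div 2. \<alpha> (2 * i) * T_rat (2 * i) ^ n)
        else (\<Sum>i = 1..(k + 1) div 2. \<alpha> (2 * i - 1) * T_rat (2 * i - 1) ^ n))" .
  qed
qed

end
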